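(* Let $d\geqslant1$, let $u_1,\dots,u_d\in\mathbb{Z}^d$ satisfy no nontrivial $\mathbb{Z}$-linear relation, $\mathcal{L}=\mathbb{Z}u_1+\dots+\mathbb{Z}u_d$, and let $(\mathscr{Q}_1,\mathcal{Q})$ be an ordered pair of two nonempty disjoint subsets of $\mathbb{Z}^d/\mathcal{L}$. Then: (1) $(\mathscr{Q}_1,\mathcal{Q})$ admits a minimal complement if and only if $(\bar v+\mathscr{Q}_1,\bar v+\mathcal{Q})$ admits a minimal complement for every $\bar v\in\mathbb{Z}^d/\mathcal{L}$. (2) If $\mathscr{Q}_1\cup\mathcal{Q}$ is a translate of a subgroup of $\mathbb{Z}^d/\mathcal{L}$, then $(\mathscr{Q}_1,\mathcal{Q})$ admits a minimal complement in $\mathbb{Z}^d/\mathcal{L}$. (3) If every nontrivial element of $\mathbb{Z}^d/\mathcal{L}$ has order two and either (a) each of $\mathscr{Q}_1,\mathcal{Q}$ is a singleton, or (b) the complement of $\mathscr{Q}_1\cup\mathcal{Q}$ in $\mathbb{Z}^d/\mathcal{L}$ is a singleton, then $(\mathscr{Q}_1,\mathcal{Q})$ admits a minimal complement.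
   Context: An ordered pair $(\mathscr{Q}_1,\mathcal{Q})$ of two nonempty disjoint subsets of the finite abelian group $\mathbb{Z}^d/\mathcal{L}$ admits a minimal complement in $\mathbb{Z}^d/\mathcal{L}$ if there is a nonempty $\mathcal{N}\subseteq\mathbb{Z}^d/\mathcal{L}$ with (i) $\mathcal{N}+(\mathcal{Q}\cup\mathscr{Q}_1)=\mathbb{Z}^d/\mathcal{L}$ and (ii) for every $n\in\mathcal{N}$ there is $q\in\mathscr{Q}_1$ with $n+q\neq n'+q'$ for all $n'\in\mathcal{N}\setminus\{n\}$, $q'\in\mathcal{Q}\cup\mathscr{Q}_1$. *)

theory Defs
  imports "HOL-Analysis.Analysis"
begin

text \<open>Z^d is modelled as int^'n with 'n a finite type, d = CARD('n) \<ge> 1.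
 The lattice generated by u_i (i :: 'n).\<close>
definition lat :: "('n::finite \<Rightarrow> int^'n) \<Rightarrow> (int^'n) set" where
  "lat u = range (\<lambda>c::'n \<Rightarrow> int. \<Sum>i\<in>UNIV. c i *s u i)"

definition cls :: "(int^'n::finite) set \<Rightarrow> int^'n \<Rightarrow> (int^'n) set" where
  "cls L x = (\<lambda>l. x + l) ` L"

definition quot :: "(int^'n::finite) set \<Rightarrow> (int^'n) set set" where
  "quot L = range (cls L)"

definition qadd :: "(int^'n::finite) set \<Rightarrow> (int^'n) set \<Rightarrow> (int^'n) set" where
  "qadd A B = {a + b | a b. a \<in> A \<and> b \<in> B}"

definition qsubgroup :: "(int^'n::finite) set \<Rightarrow> (int^'n) set set \<Rightarrow> bool" where
  "qsubgroup L H \<longleftrightarrow> H \<subseteq> quot L \<and> L \<in> H \<and>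
     (\<forall>a\<in>H. \<forall>b\<in>H. qadd a b \<in> H) \<and> (\<forall>a\<in>H. uminus ` a \<in> H)"

definition admits_mc :: "(int^'n::finite) set \<Rightarrow> (int^'n) set set \<Rightarrow> (int^'n) set set \<Rightarrow> bool" where
  "admits_mc L Q1 Q \<longleftrightarrow> (\<exists>N. N \<noteq> {} \<and> N \<subseteq> quot L \<and>
      {qadd n q | n q. n \<in> N \<and> q \<in> Q \<union> Q1} = quot L \<and>
      (\<forall>n\<in>N. \<exists>q\<in>Q1. \<forall>n'\<in>N - {n}. \<forall>q'\<in>Q \<union> Q1. qadd n q \<noteq> qadd n' q'))"

end

(*
  Z^d/L is an abelian group under Minkowski addition of cosets, and every claim holds in any
  abelian group G. Translating a minimal complement N of (Q1, Q) by inv v gives one of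
  (v Q1, v Q), since (inv v n)(v q) = n q. If Q1 \<union> Q is a subgroup H, a transversal N of the
  cosets of H works: the products n h exhaust G, and n q = n' q' with q, q' \<in> H puts n and n'
  in the same coset; cosets of H follow by translation. In exponent two, {a, b} is the coset
  b{1, ab}, and if only c lies outside Q1 \<union> Q then N = {1, qc} (q \<in> Q1) works because c = (qc)q.
*)
theory Submission
  imports Defs "HOL-Algebra.Coset" "HOL-Library.Set_Algebras"
begin

definition admits_minimal_complement :: "('a, 'b) monoid_scheme \<Rightarrow> 'a set \<Rightarrow> 'a set \<Rightarrow> bool" where
  "admits_minimal_complement G Q1 Q \<longleftrightarrow> (\<exists>N. N \<noteq> {} \<and> N \<subseteq> carrier G \<and>
      {n \<otimes>\<^bsub>G\<^esub> q | n q. n \<in> N \<and> q \<in> Q \<union> Q1} = carrier G \<and>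
      (\<forall>n\<in>N. \<exists>q\<in>Q1. \<forall>n'\<in>N - {n}. \<forall>q'\<in>Q \<union> Q1. n \<otimes>\<^bsub>G\<^esub> q \<noteq> n' \<otimes>\<^bsub>G\<^esub> q'))"

lemma admits_minimal_complementI:
  assumes "N \<noteq> {}" "N \<subseteq> carrier G" "{n \<otimes>\<^bsub>G\<^esub> q | n q. n \<in> N \<and> q \<in> Q \<union> Q1} = carrier G"
    "\<And>n. n \<in> N \<Longrightarrow> \<exists>q\<in>Q1. \<forall>n'\<in>N - {n}. \<forall>q'\<in>Q \<union> Q1. n \<otimes>\<^bsub>G\<^esub> q \<noteq> n' \<otimes>\<^bsub>G\<^esub> q'"
  shows "admits_minimal_complement G Q1 Q"
  unfolding admits_minimal_complement_def by (intro exI[of _ N] conjI ballI assms)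

context comm_group
begin

lemma translate_cancel:
  assumes "v \<in> carrier G" "n \<in> carrier G" "q \<in> carrier G"
  shows "(inv v \<otimes> n) \<otimes> (v \<otimes> q) = n \<otimes> q"
  using assms by (metis inv_closed l_inv l_one m_assoc m_closed m_comm)

lemma translate_inv_translate:
  assumes "v \<in> carrier G" "S \<subseteq> carrier G"
  shows "(\<otimes>) (inv v) ` (\<otimes>) v ` S = S" "(\<otimes>) v ` (\<otimes>) (inv v) ` S = S"
  using assms by (force simp: image_image m_assoc[symmetric])+

lemma admits_minimal_complement_translate:
  assumes v: "v \<in> carrier G" and sub: "Q1 \<subseteq> carrier G" "Q \<subseteq> carrier G"
    and mc: "admits_minimal_complement G Q1 Q"
  shows "admits_minimal_complement G ((\<otimes>) v ` Q1) ((\<otimes>) v ` Q)"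
proof -
  obtain N where N: "N \<noteq> {}" "N \<subseteq> carrier G"
    and cover: "{n \<otimes> q | n q. n \<in> N \<and> q \<in> Q \<union> Q1} = carrier G"
    and unique: "\<forall>n\<in>N. \<exists>q\<in>Q1. \<forall>n'\<in>N - {n}. \<forall>q'\<in>Q \<union> Q1. n \<otimes> q \<noteq> n' \<otimes> q'"
    using mc unfolding admits_minimal_complement_def by blast
  have cancel: "(inv v \<otimes> n) \<otimes> (v \<otimes> q) = n \<otimes> q" if "n \<in> N" "q \<in> Q \<union> Q1" for n q
    using that N(2) sub by (intro translate_cancel[OF v]) auto
  show ?thesis
  proof (rule admits_minimal_complementI[where N = "(\<otimes>) (inv v) ` N"])
    show "(\<otimes>) (inv v) ` N \<noteq> {}" "(\<otimes>) (inv v) ` N \<subseteq> carrier G"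
      using N v by auto
    have "{n \<otimes> q | n q. n \<in> (\<otimes>) (inv v) ` N \<and> q \<in> (\<otimes>) v ` Q \<union> (\<otimes>) v ` Q1}
        = {(inv v \<otimes> n) \<otimes> (v \<otimes> q) | n q. n \<in> N \<and> q \<in> Q \<union> Q1}"
      by auto
    also have "\<dots> = {n \<otimes> q | n q. n \<in> N \<and> q \<in> Q \<union> Q1}"
      using cancel by force
    finally show "{n \<otimes> q | n q. n \<in> (\<otimes>) (inv v) ` N \<and> q \<in> (\<otimes>) v ` Q \<union> (\<otimes>) v ` Q1} = carrier G"
      using cover by simp
  next
    fix m assume "m \<in> (\<otimes>) (inv v) ` N"
    then obtain n where n: "n \<in> N" "m = inv v \<otimes> n" by blast
    obtain q where q: "q \<in> Q1" and q_unique: "\<forall>n'\<in>N - {n}. \<forall>q'\<in>Q \<union> Q1. n \<otimes> q \<noteq> n' \<otimes> q'"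
      using unique n(1) by blast
    show "\<exists>q\<in>(\<otimes>) v ` Q1. \<forall>n'\<in>(\<otimes>) (inv v) ` N - {m}. \<forall>q'\<in>(\<otimes>) v ` Q \<union> (\<otimes>) v ` Q1.
        m \<otimes> q \<noteq> n' \<otimes> q'"
    proof (intro bexI[of _ "v \<otimes> q"] ballI)
      fix m' r' assume m': "m' \<in> (\<otimes>) (inv v) ` N - {m}" and r': "r' \<in> (\<otimes>) v ` Q \<union> (\<otimes>) v ` Q1"
      obtain n' where n': "n' \<in> N" "m' = inv v \<otimes> n'" using m' by blast
      obtain q' where q': "q' \<in> Q \<union> Q1" "r' = v \<otimes> q'" using r' by blast
      have "n' \<noteq> n" using m' n n' by blast
      then have "n \<otimes> q \<noteq> n' \<otimes> q'" using q_unique n' q' by blast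
      then show "m \<otimes> (v \<otimes> q) \<noteq> m' \<otimes> r'"
        using cancel[OF n(1)] cancel[OF n'(1) q'(1)] q n(2) n'(2) q'(2) by simp
    qed (use q in blast)
  qed
qed

lemma admits_minimal_complement_translate_iff:
  assumes "Q1 \<subseteq> carrier G" "Q \<subseteq> carrier G"
  shows "admits_minimal_complement G Q1 Q \<longleftrightarrow>
    (\<forall>v\<in>carrier G. admits_minimal_complement G ((\<otimes>) v ` Q1) ((\<otimes>) v ` Q))"
proof
  assume "\<forall>v\<in>carrier G. admits_minimal_complement G ((\<otimes>) v ` Q1) ((\<otimes>) v ` Q)"
  then have "admits_minimal_complement G ((\<otimes>) \<one> ` Q1) ((\<otimes>) \<one> ` Q)" by blast
  moreover have "(\<otimes>) \<one> ` S = S" if "S \<subseteq> carrier G" for S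
    using that by force
  ultimately show "admits_minimal_complement G Q1 Q" using assms by simp
qed (use assms admits_minimal_complement_translate in blast)

lemma l_coset_eq_if_mult_eq:
  assumes H: "subgroup H G" and n: "n \<in> carrier G" "n' \<in> carrier G"
    and q: "q \<in> H" "q' \<in> H" and eq: "n \<otimes> q = n' \<otimes> q'"
  shows "n <# H = n' <# H"
proof -
  have "q \<in> carrier G" "q' \<in> carrier G" using q subgroup.subset[OF H] by auto
  then have "n = n' \<otimes> (q' \<otimes> inv q)"
    using eq n by (metis inv_solve_right m_assoc inv_closed m_closed)
  then have "n \<in> n' <# H"
    using q subgroup.m_closed[OF H] subgroup.m_inv_closed[OF H] unfolding l_coset_def by blast
  then show ?thesis using l_repr_independence[OF _ n(2) H] by simp
qed

lemma subgroup_admits_minimal_complement: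
  assumes H: "subgroup H G" and QH: "Q1 \<union> Q = H" and ne: "Q1 \<noteq> {}"
  shows "admits_minimal_complement G Q1 Q"
proof -
  define rep where "rep x = (SOME r. r \<in> x <# H)" for x
  have H_carrier: "H \<subseteq> carrier G" using H by (rule subgroup.subset)
  have rep_coset: "rep x \<in> x <# H" if "x \<in> carrier G" for x
  proof -
    have "x \<otimes> \<one> \<in> x <# H" using subgroup.one_closed[OF H] unfolding l_coset_def by blast
    then show ?thesis unfolding rep_def using that by (metis someI r_one)
  qed
  have rep_carrier: "rep x \<in> carrier G" if "x \<in> carrier G" for x
    using l_coset_carrier[OF rep_coset[OF that] that H] .
  have same_coset: "rep x <# H = x <# H" if "x \<in> carrier G" for x
    using l_repr_independence[OF rep_coset[OF that] that H] by simp
  show ?thesis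
  proof (rule admits_minimal_complementI[where N = "rep ` carrier G"])
    show "rep ` carrier G \<noteq> {}" "rep ` carrier G \<subseteq> carrier G"
      using rep_carrier by auto
    show "{n \<otimes> q | n q. n \<in> rep ` carrier G \<and> q \<in> Q \<union> Q1} = carrier G"
    proof (intro equalityI subsetI)
      fix z assume "z \<in> {n \<otimes> q | n q. n \<in> rep ` carrier G \<and> q \<in> Q \<union> Q1}"
      then show "z \<in> carrier G" using rep_carrier QH H_carrier by blast
    next
      fix x assume x: "x \<in> carrier G"
      obtain h where h: "h \<in> H" "rep x = x \<otimes> h" using rep_coset[OF x] unfolding l_coset_def by blast
      have "x = rep x \<otimes> inv h" using h x H_carrier by (simp add: m_assoc subsetD)
      moreover have "inv h \<in> Q \<union> Q1" using subgroup.m_inv_closed[OF H h(1)] QH by blast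
      ultimately show "x \<in> {n \<otimes> q | n q. n \<in> rep ` carrier G \<and> q \<in> Q \<union> Q1}" using x by blast
    qed
  next
    fix n assume "n \<in> rep ` carrier G"
    then obtain x where x: "x \<in> carrier G" "n = rep x" by blast
    obtain q where q: "q \<in> Q1" using ne by blast
    show "\<exists>q\<in>Q1. \<forall>n'\<in>rep ` carrier G - {n}. \<forall>q'\<in>Q \<union> Q1. n \<otimes> q \<noteq> n' \<otimes> q'"
    proof (intro bexI[OF _ q] ballI notI)
      fix n' q' assume n': "n' \<in> rep ` carrier G - {n}" and q': "q' \<in> Q \<union> Q1"
        and eq: "n \<otimes> q = n' \<otimes> q'"
      obtain y where y: "y \<in> carrier G" "n' = rep y" using n' by blast
      have "q \<in> H" "q' \<in> H" using q q' QH by auto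
      then have "rep x <# H = rep y <# H"
        using l_coset_eq_if_mult_eq[OF H rep_carrier[OF x(1)] rep_carrier[OF y(1)]] eq x y by simp
      then have "x <# H = y <# H" using same_coset x y by simp
      then show False using n' x y by (simp add: rep_def)
    qed
  qed
qed

lemma coset_admits_minimal_complement:
  assumes v: "v \<in> carrier G" and H: "subgroup H G"
    and QH: "Q1 \<union> Q = (\<otimes>) v ` H" and ne: "Q1 \<noteq> {}"
  shows "admits_minimal_complement G Q1 Q"
proof -
  have H_carrier: "H \<subseteq> carrier G" using H by (rule subgroup.subset)
  have "Q1 \<union> Q \<subseteq> carrier G" unfolding QH using v H_carrier by auto
  then have sub: "Q1 \<subseteq> carrier G" "Q \<subseteq> carrier G" by auto
  have "(\<otimes>) (inv v) ` Q1 \<union> (\<otimes>) (inv v) ` Q = H"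
    using QH translate_inv_translate[OF v H_carrier] by (simp flip: image_Un)
  then have "admits_minimal_complement G ((\<otimes>) (inv v) ` Q1) ((\<otimes>) (inv v) ` Q)"
    using H ne by (intro subgroup_admits_minimal_complement) auto
  moreover have "(\<otimes>) (inv v) ` Q1 \<subseteq> carrier G" "(\<otimes>) (inv v) ` Q \<subseteq> carrier G"
    using v sub by auto
  ultimately have "admits_minimal_complement G
      ((\<otimes>) v ` (\<otimes>) (inv v) ` Q1) ((\<otimes>) v ` (\<otimes>) (inv v) ` Q)"
    by (rule admits_minimal_complement_translate[OF v, rotated 2])
  then show ?thesis
    using translate_inv_translate(2)[OF v] sub by simp
qed

lemma exponent_two_square:
  assumes "\<forall>x\<in>carrier G. x \<noteq> \<one> \<longrightarrow> x \<otimes> x = \<one>" "x \<in> carrier G"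
  shows "x \<otimes> x = \<one>"
  using assms by (cases "x = \<one>") auto

lemma exponent_two_subgroup:
  assumes x: "x \<in> carrier G" and xx: "x \<otimes> x = \<one>"
  shows "subgroup {\<one>, x} G"
proof (rule subgroupI)
  show "{\<one>, x} \<subseteq> carrier G" using x by simp
  show "inv a \<in> {\<one>, x}" if "a \<in> {\<one>, x}" for a
    using that x xx inv_equality[OF xx] by auto
  show "a \<otimes> b \<in> {\<one>, x}" if "a \<in> {\<one>, x}" "b \<in> {\<one>, x}" for a b
    using that x xx by auto
qed simp

lemma exponent_two_singletons_admit_minimal_complement:
  assumes exp2: "\<And>x. x \<in> carrier G \<Longrightarrow> x \<otimes> x = \<one>"
    and a: "a \<in> carrier G" and b: "b \<in> carrier G"
  shows "admits_minimal_complement G {a} {b}"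
proof (rule coset_admits_minimal_complement)
  show "subgroup {\<one>, a \<otimes> b} G" using a b exp2 by (intro exponent_two_subgroup) auto
  have "b \<otimes> (a \<otimes> b) = a" using a b exp2[OF b] by (metis m_lcomm r_one)
  then show "{a} \<union> {b} = (\<otimes>) b ` {\<one>, a \<otimes> b}" using b by auto
qed (use b in auto)

lemma exponent_two_cosingleton_admits_minimal_complement:
  assumes exp2: "\<And>x. x \<in> carrier G \<Longrightarrow> x \<otimes> x = \<one>"
    and sub: "Q1 \<subseteq> carrier G" "Q \<subseteq> carrier G" and ne: "Q1 \<noteq> {}"
    and cosingleton: "carrier G - (Q1 \<union> Q) = {c}"
  shows "admits_minimal_complement G Q1 Q"
proof -
  have c: "c \<in> carrier G" and Q_iff: "\<And>x. x \<in> Q \<union> Q1 \<longleftrightarrow> x \<in> carrier G \<and> x \<noteq> c"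
    using cosingleton sub by blast+
  obtain q where q: "q \<in> Q1" using ne by blast
  have qc: "q \<in> carrier G" using q sub by blast
  define d where "d = q \<otimes> c"
  have d: "d \<in> carrier G" using qc c by (simp add: d_def)
  have dq: "d \<otimes> q = c"
    using qc c exp2[OF qc] by (metis d_def l_one m_assoc m_comm)
  have solve: "y = d \<otimes> z" if "y \<in> carrier G" "d \<otimes> y = z" for y z
    using that d exp2[OF d] by (metis l_one m_assoc)
  show ?thesis
  proof (rule admits_minimal_complementI[where N = "{\<one>, d}"])
    show "{\<one>, d} \<subseteq> carrier G" using d by simp
    show "{n \<otimes> r | n r. n \<in> {\<one>, d} \<and> r \<in> Q \<union> Q1} = carrier G"
    proof (intro equalityI subsetI)
      fix z assume "z \<in> {n \<otimes> r | n r. n \<in> {\<one>, d} \<and> r \<in> Q \<union> Q1}"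
      then show "z \<in> carrier G" using d Q_iff by auto
    next
      fix x assume x: "x \<in> carrier G"
      show "x \<in> {n \<otimes> r | n r. n \<in> {\<one>, d} \<and> r \<in> Q \<union> Q1}"
      proof (cases "x = c")
        case True
        then show ?thesis using dq q by blast
      next
        case False
        then have "x = \<one> \<otimes> x" "x \<in> Q \<union> Q1" using x Q_iff by auto
        then show ?thesis by blast
      qed
    qed
  next
    fix n assume n: "n \<in> {\<one>, d}"
    show "\<exists>q\<in>Q1. \<forall>n'\<in>{\<one>, d} - {n}. \<forall>q'\<in>Q \<union> Q1. n \<otimes> q \<noteq> n' \<otimes> q'"
    proof (intro bexI[OF _ q] ballI notI)
      fix n' q' assume n': "n' \<in> {\<one>, d} - {n}" and q': "q' \<in> Q \<union> Q1"
        and eq: "n \<otimes> q = n' \<otimes> q'"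
      have q'c: "q' \<in> carrier G" "q' \<noteq> c" using q' Q_iff by auto
      show False
      proof (cases "n = \<one>")
        case True
        then have "d \<otimes> q' = q" using n' eq qc by simp
        then show False using solve[OF q'c(1)] dq q'c(2) by simp
      next
        case False
        then have "n = d" "n' = \<one>" using n n' by auto
        then show False using eq dq q'c by simp
      qed
    qed
  qed simp
qed

lemma exponent_two_admits_minimal_complement:
  assumes exp2: "\<forall>x\<in>carrier G. x \<noteq> \<one> \<longrightarrow> x \<otimes> x = \<one>"
    and sub: "Q1 \<subseteq> carrier G" "Q \<subseteq> carrier G" and ne: "Q1 \<noteq> {}"
    and shape: "(\<exists>a b. Q1 = {a} \<and> Q = {b}) \<or> (\<exists>c. carrier G - (Q1 \<union> Q) = {c})"
  shows "admits_minimal_complement G Q1 Q"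
  using shape
proof (elim disjE exE conjE)
  fix a b assume "Q1 = {a}" "Q = {b}"
  then show ?thesis
    using exponent_two_singletons_admit_minimal_complement[OF exponent_two_square[OF exp2]] sub
    by simp
next
  fix c assume "carrier G - (Q1 \<union> Q) = {c}"
  then show ?thesis
    using exponent_two_cosingleton_admits_minimal_complement[OF exponent_two_square[OF exp2] sub ne]
    by simp
qed

end

definition add_subgroup :: "'a::ab_group_add set \<Rightarrow> bool" where
  "add_subgroup L \<longleftrightarrow> 0 \<in> L \<and> (\<forall>x\<in>L. \<forall>y\<in>L. x + y \<in> L) \<and> (\<forall>x\<in>L. - x \<in> L)"

lemma add_subgroup_lat: "add_subgroup (lat u)"
  unfolding add_subgroup_def lat_def
proof (intro conjI ballI)
  show "0 \<in> range (\<lambda>c. \<Sum>i\<in>UNIV. c i *s u i)"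
    by (rule range_eqI[of _ _ "\<lambda>_. 0"]) simp
next
  fix x y assume "x \<in> range (\<lambda>c. \<Sum>i\<in>UNIV. c i *s u i)" "y \<in> range (\<lambda>c. \<Sum>i\<in>UNIV. c i *s u i)"
  then obtain a b where "x = (\<Sum>i\<in>UNIV. a i *s u i)" "y = (\<Sum>i\<in>UNIV. b i *s u i)" by auto
  then show "x + y \<in> range (\<lambda>c. \<Sum>i\<in>UNIV. c i *s u i)"
    by (intro range_eqI[of _ _ "\<lambda>i. a i + b i"]) (simp add: vector_sadd_rdistrib sum.distrib)
next
  fix x assume "x \<in> range (\<lambda>c. \<Sum>i\<in>UNIV. c i *s u i)"
  then obtain a where "x = (\<Sum>i\<in>UNIV. a i *s u i)" by auto
  then show "- x \<in> range (\<lambda>c. \<Sum>i\<in>UNIV. c i *s u i)"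
    by (intro range_eqI[of _ _ "\<lambda>i. - a i"]) (simp add: sum_negf[symmetric] vec_eq_iff)
qed

lemma add_subgroup_plus_self: "add_subgroup L \<Longrightarrow> L + L = L"
  unfolding add_subgroup_def set_plus_def by force

lemma qadd_eq_set_plus: "qadd A B = A + B"
  unfolding qadd_def set_plus_def by blast

lemma cls_eq_elt_set_plus: "cls L x = x +o L"
  unfolding cls_def elt_set_plus_def by blast

lemma qadd_cls: "add_subgroup L \<Longrightarrow> qadd (cls L x) (cls L y) = cls L (x + y)"
  by (simp add: qadd_eq_set_plus cls_eq_elt_set_plus set_plus_rearrange add_subgroup_plus_self)

lemma uminus_cls: "add_subgroup L \<Longrightarrow> uminus ` cls L x = cls L (- x)"
  unfolding add_subgroup_def cls_def by (force simp: image_image intro: image_eqI[of _ _ "- l" for l])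

definition quot_group :: "(int^'n::finite) set \<Rightarrow> (int^'n) set monoid" where
  "quot_group L = \<lparr>carrier = quot L, mult = qadd, one = L\<rparr>"

lemma quot_group_simps [simp]:
  "carrier (quot_group L) = quot L" "mult (quot_group L) = qadd" "one (quot_group L) = L"
  by (simp_all add: quot_group_def)

lemma admits_mc_iff: "admits_mc L Q1 Q \<longleftrightarrow> admits_minimal_complement (quot_group L) Q1 Q"
  by (simp add: admits_mc_def admits_minimal_complement_def)

lemma comm_group_quot_group:
  assumes L: "add_subgroup L"
  shows "comm_group (quot_group L)"
proof (rule comm_groupI)
  have cls_zero: "cls L 0 = L" by (simp add: cls_def)
  show "\<one>\<^bsub>quot_group L\<^esub> \<in> carrier (quot_group L)"
    using rangeI[of "cls L" 0] cls_zero by (simp add: quot_def)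
  fix x y z assume "x \<in> carrier (quot_group L)" "y \<in> carrier (quot_group L)"
  then obtain a b where ab: "x = cls L a" "y = cls L b" by (auto simp: quot_def)
  show "x \<otimes>\<^bsub>quot_group L\<^esub> y \<in> carrier (quot_group L)"
    using ab qadd_cls[OF L] by (simp add: quot_def)
  show "x \<otimes>\<^bsub>quot_group L\<^esub> y \<otimes>\<^bsub>quot_group L\<^esub> z = x \<otimes>\<^bsub>quot_group L\<^esub> (y \<otimes>\<^bsub>quot_group L\<^esub> z)"
    by (simp add: qadd_eq_set_plus add.assoc)
  show "x \<otimes>\<^bsub>quot_group L\<^esub> y = y \<otimes>\<^bsub>quot_group L\<^esub> x"
    by (simp add: qadd_eq_set_plus add.commute)
  show "\<one>\<^bsub>quot_group L\<^esub> \<otimes>\<^bsub>quot_group L\<^esub> x = x"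
    using ab qadd_cls[OF L, of 0 a] cls_zero by simp
  show "\<exists>y\<in>carrier (quot_group L). y \<otimes>\<^bsub>quot_group L\<^esub> x = \<one>\<^bsub>quot_group L\<^esub>"
    using ab qadd_cls[OF L, of "- a" a] cls_zero by (auto simp: quot_def)
qed

lemma quot_group_inv:
  assumes L: "add_subgroup L" and a: "a \<in> quot L"
  shows "inv\<^bsub>quot_group L\<^esub> a = uminus ` a"
proof -
  interpret comm_group "quot_group L" using comm_group_quot_group[OF L] .
  obtain x where x: "a = cls L x" using a by (auto simp: quot_def)
  have "qadd (uminus ` a) a = L"
    using x uminus_cls[OF L] qadd_cls[OF L, of "- x" x] by (simp add: cls_def)
  moreover have "uminus ` a \<in> quot L" using x uminus_cls[OF L] by (simp add: quot_def)
  ultimately show ?thesis using a by (intro inv_equality) simp_all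
qed

lemma subgroup_quot_group_if_qsubgroup:
  assumes L: "add_subgroup L" and H: "qsubgroup L H"
  shows "subgroup H (quot_group L)"
proof -
  interpret comm_group "quot_group L" using comm_group_quot_group[OF L] .
  show ?thesis
    using H quot_group_inv[OF L] unfolding qsubgroup_def by (intro subgroupI) auto
qed


theorem lemma4p20:
  fixes u :: "'n::finite \<Rightarrow> int^'n"
    and Q1 Q :: "(int^'n) set set"
  assumes indep: "\<And>c::'n \<Rightarrow> int. (\<Sum>i\<in>UNIV. c i *s u i) = 0 \<Longrightarrow> (\<forall>i. c i = 0)"
    and Q1_sub: "Q1 \<subseteq> quot (lat u)" and Q_sub: "Q \<subseteq> quot (lat u)"
    and Q1_ne: "Q1 \<noteq> {}" and Q_ne: "Q \<noteq> {}"
    and disj: "Q1 \<inter> Q = {}"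
  shows "(admits_mc (lat u) Q1 Q \<longleftrightarrow>
            (\<forall>v\<in>quot (lat u). admits_mc (lat u) (qadd v ` Q1) (qadd v ` Q)))
       \<and> ((\<exists>v\<in>quot (lat u). \<exists>H. qsubgroup (lat u) H \<and> Q1 \<union> Q = qadd v ` H)
            \<longrightarrow> admits_mc (lat u) Q1 Q)
       \<and> (((\<forall>x\<in>quot (lat u). x \<noteq> lat u \<longrightarrow> qadd x x = lat u) \<and>
            ((\<exists>a b. Q1 = {a} \<and> Q = {b}) \<or> (\<exists>c. quot (lat u) - (Q1 \<union> Q) = {c})))
            \<longrightarrow> admits_mc (lat u) Q1 Q)"
proof -
  interpret comm_group "quot_group (lat u)"
    using comm_group_quot_group[OF add_subgroup_lat] .
  have "admits_mc (lat u) Q1 Q \<longleftrightarrow>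
      (\<forall>v\<in>quot (lat u). admits_mc (lat u) (qadd v ` Q1) (qadd v ` Q))"
    using admits_minimal_complement_translate_iff Q1_sub Q_sub by (simp add: admits_mc_iff)
  moreover have "(\<exists>v\<in>quot (lat u). \<exists>H. qsubgroup (lat u) H \<and> Q1 \<union> Q = qadd v ` H)
      \<longrightarrow> admits_mc (lat u) Q1 Q"
    using coset_admits_minimal_complement[of _ _ Q1 Q] Q1_ne
      subgroup_quot_group_if_qsubgroup[OF add_subgroup_lat[of u]]
    by (auto simp: admits_mc_iff)
  moreover have "((\<forall>x\<in>quot (lat u). x \<noteq> lat u \<longrightarrow> qadd x x = lat u) \<and>
      ((\<exists>a b. Q1 = {a} \<and> Q = {b}) \<or> (\<exists>c. quot (lat u) - (Q1 \<union> Q) = {c})))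
      \<longrightarrow> admits_mc (lat u) Q1 Q"
    using exponent_two_admits_minimal_complement[of Q1 Q] Q1_sub Q_sub Q1_ne
    by (simp add: admits_mc_iff)
  ultimately show ?thesis by blast
qed

end
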